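(* Let $n\ge 1$. Under optimal play, the Sign Game on the star graph $S_n$ results in a draw when $n$ is even, and is won by Player 2 when $n$ is odd.
   Context: The Sign Game on a finite simple undirected graph $G$: two players, Player P and Player N, alternate turns; the player who moves first is called Player 1 and the other Player 2 (either of P, N may be Player 1). On a turn, a player chooses a vertex of $G$ not yet assigned a value and assigns it $+1$ or $-1$. The game ends when every vertex has been assigned. The score of an edge $uv$ is the product of the values of $u$ and $v$, and the score $s(G)$ of the game is the sum of the scores of all edges. Player P wins if $s(G)>0$, Player N wins if $s(G)<0$, and the game is a draw if $s(G)=0$. "Under optimal play" means both players play optimally, each with primary goal of winning and secondary goal of at least drawing; the result is the outcome of this finite perfect-information game under such play. The star graph $S_n$ has $n+1$ vertices: one central vertex adjacent to each of $n$ leaves, with no other edges. *)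

theory Defs
  imports Main
begin

text \<open>A finite simple graph is given by a vertex set V and an edge set E of
2-element subsets of V. A (complete) assignment is f :: 'a \<Rightarrow> int with values +1/-1
on V.\<close>

definition score :: "'a set set \<Rightarrow> ('a \<Rightarrow> int) \<Rightarrow> int" where
  "score E f = (\<Sum>e\<in>E. \<Prod>v\<in>e. f v)"

text \<open>Game value (minimax) of a position: k = number of unassigned vertices,
pturn = True iff Player P is to move, f = current assignment, U = unassigned
vertices. The value is sgn of the final score: 1 = P wins, 0 = draw, -1 = N wins.
P maximises and N minimises this value, which is exactly "primary goal winning,
secondary goal at least drawing".\<close>

primrec sg_val :: "'a set set \<Rightarrow> nat \<Rightarrow> bool \<Rightarrow> ('a \<Rightarrow> int) \<Rightarrow> 'a set \<Rightarrow> int" where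
  "sg_val E 0 pturn f U = sgn (score E f)"
| "sg_val E (Suc k) pturn f U =
     (let opts = {sg_val E k (\<not> pturn) (f(v := s)) (U - {v}) | v s. v \<in> U \<and> s \<in> {1, -1}}
      in if pturn then Max opts else Min opts)"

definition sign_game_outcome :: "'a set \<Rightarrow> 'a set set \<Rightarrow> bool \<Rightarrow> int" where
  "sign_game_outcome V E P_first = sg_val E (card V) P_first (\<lambda>_. 0) V"

definition star_vertices :: "nat \<Rightarrow> nat set" where
  "star_vertices n = {0..n}"

definition star_edges :: "nat \<Rightarrow> nat set set" where
  "star_edges n = {{0, i} | i. i \<in> {1..n}}"

end

theory Submission
  imports Defs
begin

text \<open>On the star the score is \<open>c * S\<close>, where \<open>c\<close> is the value of the centre and \<open>S\<close> the
sum of the leaf values. Once \<open>c\<close> is fixed, every leaf move changes \<open>c * S\<close> by \<open>\<plusminus>1\<close> at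
the mover's choice, so these moves cancel in pairs and only the last mover gains one unit.
While the centre is free and \<open>m\<close> leaves are still free, the position is worth
\<open>sgn (\<bar>S\<bar> - [m odd])\<close> to the player to move: assigning the centre secures \<open>\<bar>S\<bar>\<close> but
hands the last leaf move to the opponent when \<open>m\<close> is odd, and a leaf move changes \<open>\<bar>S\<bar>\<close>
by one only. At the start \<open>S = 0\<close> and \<open>m = n\<close>, so the first player can only draw for
even \<open>n\<close> and loses for odd \<open>n\<close>.\<close>

definition player_sign :: "bool \<Rightarrow> int" where
  "player_sign p = (if p then 1 else -1)"

lemma player_sign_simps [simp]:
  "player_sign True = 1" "player_sign False = -1" "player_sign (\<not> p) = - player_sign p"
  by (simp_all add: player_sign_def)

lemma sum_fun_upd:
  fixes f :: "'a \<Rightarrow> 'b::ab_group_add"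
  assumes "finite A" "v \<in> A"
  shows "sum (f(v := s)) A = sum f A - f v + s"
proof -
  have "sum (f(v := s)) A = s + sum (f(v := s)) (A - {v})"
    using assms by (simp add: sum.remove)
  also have "sum (f(v := s)) (A - {v}) = sum f (A - {v})"
    by (rule sum.cong) auto
  also have "\<dots> = sum f A - f v"
    using assms by (simp add: sum_diff1)
  finally show ?thesis by (simp add: algebra_simps)
qed

lemma score_star_edges: "score (star_edges n) f = f 0 * (\<Sum>i\<in>{1..n}. f i)"
proof -
  have edges: "star_edges n = (\<lambda>i. {0, i}) ` {1..n}"
    unfolding star_edges_def by auto
  have "inj_on (\<lambda>i::nat. {0, i}) {1..n}"
    by (auto simp: inj_on_def doubleton_eq_iff)
  then have "score (star_edges n) f = (\<Sum>i\<in>{1..n}. \<Prod>v\<in>{0, i}. f v)"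
    unfolding score_def edges by (simp add: sum.reindex)
  also have "\<dots> = (\<Sum>i\<in>{1..n}. f 0 * f i)"
    by (rule sum.cong) auto
  finally show ?thesis by (simp add: sum_distrib_left)
qed

definition move_values :: "'a set set \<Rightarrow> nat \<Rightarrow> bool \<Rightarrow> ('a \<Rightarrow> int) \<Rightarrow> 'a set \<Rightarrow> int set" where
  "move_values E k p f U =
     {sg_val E k (\<not> p) (f(v := s)) (U - {v}) | v s. v \<in> U \<and> s \<in> {1, -1}}"

lemma sg_val_Suc_move_values:
  "sg_val E (Suc k) p f U =
     (if p then Max (move_values E k p f U) else Min (move_values E k p f U))"
  by (simp add: move_values_def Let_def)

lemma move_values_uniform:
  assumes "U \<noteq> {}"
    and "\<And>v s. v \<in> U \<Longrightarrow> s \<in> {1, -1} \<Longrightarrow> sg_val E k (\<not> p) (f(v := s)) (U - {v}) = q s"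
  shows "move_values E k p f U = {q 1, q (-1)}"
  using assms unfolding move_values_def by auto metis+

lemma move_values_split:
  assumes "a \<in> U" "U - {a} \<noteq> {}"
    and "\<And>s. s \<in> {1, -1} \<Longrightarrow> sg_val E k (\<not> p) (f(a := s)) (U - {a}) = q s"
    and "\<And>v s. v \<in> U - {a} \<Longrightarrow> s \<in> {1, -1} \<Longrightarrow> sg_val E k (\<not> p) (f(v := s)) (U - {v}) = r s"
  shows "move_values E k p f U = {q 1, q (-1), r 1, r (-1)}"
  using assms unfolding move_values_def by auto metis+

lemma sgn_shift_Max_Min:
  fixes c x :: int
  assumes "c \<in> {1, -1}"
  shows "Max {sgn (x + c), sgn (x - c)} = sgn (x + 1)"
    and "Min {sgn (x + c), sgn (x - c)} = sgn (x - 1)"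
  using assms by (auto simp: sgn_if)

lemma sg_val_star_centre_assigned:
  assumes "U \<subseteq> {1..n}" "card U = k" "f 0 \<in> {1, -1}" "\<forall>v\<in>U. f v = 0"
  shows "sg_val (star_edges n) k p f U =
           sgn (score (star_edges n) f + player_sign p * of_bool (odd k))"
  using assms
proof (induction k arbitrary: p f U)
  case 0
  then have "U = {}" using finite_subset[of U "{1..n}"] by auto
  then show ?case by simp
next
  case (Suc k)
  define S where "S = (\<Sum>i\<in>{1..n}. f i)"
  have "U \<noteq> {}" using Suc.prems(2) by auto
  have move: "sg_val (star_edges n) k (\<not> p) (f(v := s)) (U - {v})
                = sgn (f 0 * (S + s) - player_sign p * of_bool (odd k))"
    if "v \<in> U" "s \<in> {1, -1}" for v s
  proof -
    have "v \<in> {1..n}" "v \<noteq> 0" using that Suc.prems(1) by auto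
    then have "(\<Sum>i\<in>{1..n}. (f(v := s)) i) = S + s"
      using sum_fun_upd[of "{1..n}" v f s] Suc.prems(4) that(1) by (simp add: S_def)
    then have "score (star_edges n) (f(v := s)) = f 0 * (S + s)"
      using \<open>v \<noteq> 0\<close> by (simp add: score_star_edges)
    moreover have "sg_val (star_edges n) k (\<not> p) (f(v := s)) (U - {v})
        = sgn (score (star_edges n) (f(v := s)) + player_sign (\<not> p) * of_bool (odd k))"
      using Suc.prems that \<open>v \<noteq> 0\<close> finite_subset[OF Suc.prems(1)]
      by (intro Suc.IH) auto
    ultimately show ?thesis by simp
  qed
  have moves: "move_values (star_edges n) k p f U
      = {sgn (f 0 * S - player_sign p * of_bool (odd k) + f 0),
         sgn (f 0 * S - player_sign p * of_bool (odd k) - f 0)}"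
    using move_values_uniform[OF \<open>U \<noteq> {}\<close> move] by (simp add: algebra_simps)
  show ?case
    unfolding sg_val_Suc_move_values moves sgn_shift_Max_Min[OF Suc.prems(3)]
    by (cases p; cases "odd k") (simp_all add: score_star_edges S_def)
qed

text \<open>The first two values come from assigning the centre, the last two from assigning a leaf.\<close>

lemma Max_star_move_values:
  fixes S :: int
  shows "Max {sgn (S - of_bool b), sgn (- S - of_bool b),
              - sgn (\<bar>S + 1\<bar> - of_bool (\<not> b)), - sgn (\<bar>S - 1\<bar> - of_bool (\<not> b))}
         = sgn (\<bar>S\<bar> - of_bool b)"
  by (cases b; cases "S < -1"; cases "S = -1"; cases "S = 0"; cases "S = 1")
    (simp_all add: sgn_if abs_if max_def)

lemma Min_star_move_values:
  fixes S :: int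
  shows "Min {sgn (S + of_bool b), sgn (- S + of_bool b),
              sgn (\<bar>S + 1\<bar> - of_bool (\<not> b)), sgn (\<bar>S - 1\<bar> - of_bool (\<not> b))}
         = - sgn (\<bar>S\<bar> - of_bool b)"
  by (cases b; cases "S < -1"; cases "S = -1"; cases "S = 0"; cases "S = 1")
    (simp_all add: sgn_if abs_if min_def)

lemma sg_val_star_centre_move:
  assumes "0 \<in> U" "U \<subseteq> {0..n}" "card U = Suc m" "\<forall>v\<in>U. f v = 0" "c \<in> {1, -1}"
  shows "sg_val (star_edges n) m (\<not> p) (f(0 := c)) (U - {0})
           = sgn (c * (\<Sum>i\<in>{1..n}. f i) - player_sign p * of_bool (odd m))"
proof -
  have "(\<Sum>i\<in>{1..n}. (f(0 := c)) i) = (\<Sum>i\<in>{1..n}. f i)"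
    by (rule sum.cong) auto
  moreover have "U - {0} \<subseteq> {1..n}"
    using assms(2) by auto
  ultimately show ?thesis
    using assms finite_subset[OF assms(2)]
    by (simp add: sg_val_star_centre_assigned score_star_edges)
qed

lemma sg_val_star_centre_free:
  assumes "0 \<in> U" "U \<subseteq> {0..n}" "card U = Suc m" "\<forall>v\<in>U. f v = 0"
  shows "sg_val (star_edges n) (Suc m) p f U
           = player_sign p * sgn (\<bar>\<Sum>i\<in>{1..n}. f i\<bar> - of_bool (odd m))"
  using assms
proof (induction m arbitrary: p f U)
  case 0
  define S where "S = (\<Sum>i\<in>{1..n}. f i)"
  have "U = {0}"
    using "0.prems" finite_subset[OF "0.prems"(2)] by (auto simp: card_Suc_eq)
  then have centre_move: "sg_val (star_edges n) 0 (\<not> p) (f(v := c)) (U - {v}) = sgn (c * S)"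
    if "v \<in> U" "c \<in> {1, -1}" for v c
    using that sg_val_star_centre_move[OF "0.prems"] by (simp add: S_def)
  have "move_values (star_edges n) 0 p f U
      = {sgn (1 * S), sgn (- 1 * S)}"
    by (rule move_values_uniform[OF _ centre_move]) (use "0.prems"(1) in auto)
  then show ?case
    unfolding sg_val_Suc_move_values S_def[symmetric]
    by (cases p) (auto simp: sgn_if)
next
  case (Suc m)
  define S where "S = (\<Sum>i\<in>{1..n}. f i)"
  have leaf_move: "sg_val (star_edges n) (Suc m) (\<not> p) (f(v := s)) (U - {v})
                    = - player_sign p * sgn (\<bar>S + s\<bar> - of_bool (odd m))"
    if "v \<in> U - {0}" "s \<in> {1, -1}" for v s
  proof -
    have "v \<in> {1..n}" using that Suc.prems(2) by auto
    then have "(\<Sum>i\<in>{1..n}. (f(v := s)) i) = S + s"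
      using sum_fun_upd[of "{1..n}" v f s] Suc.prems(4) that(1) by (simp add: S_def)
    moreover have "sg_val (star_edges n) (Suc m) (\<not> p) (f(v := s)) (U - {v})
        = player_sign (\<not> p) * sgn (\<bar>\<Sum>i\<in>{1..n}. (f(v := s)) i\<bar> - of_bool (odd m))"
      using Suc.prems that finite_subset[OF Suc.prems(2)] by (intro Suc.IH) auto
    ultimately show ?thesis by simp
  qed
  have "card (U - {0}) = Suc m"
    using Suc.prems(1,3) by simp
  then have "U - {0} \<noteq> {}"
    by (metis card.empty nat.distinct(1))
  have centre_move: "sg_val (star_edges n) (Suc m) (\<not> p) (f(0 := c)) (U - {0})
                      = sgn (c * S - player_sign p * of_bool (even m))"
    if "c \<in> {1, -1}" for c
    using sg_val_star_centre_move[OF Suc.prems that] by (simp add: S_def)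
  have moves: "move_values (star_edges n) (Suc m) p f U
      = {sgn (1 * S - player_sign p * of_bool (even m)),
         sgn (- 1 * S - player_sign p * of_bool (even m)),
         - player_sign p * sgn (\<bar>S + 1\<bar> - of_bool (odd m)),
         - player_sign p * sgn (\<bar>S + - 1\<bar> - of_bool (odd m))}"
    by (rule move_values_split[OF Suc.prems(1) \<open>U - {0} \<noteq> {}\<close> centre_move leaf_move])
  show ?case
  proof (cases p)
    case True
    with moves have "move_values (star_edges n) (Suc m) p f U
      = {sgn (S - of_bool (even m)), sgn (- S - of_bool (even m)),
         - sgn (\<bar>S + 1\<bar> - of_bool (\<not> even m)), - sgn (\<bar>S - 1\<bar> - of_bool (\<not> even m))}"
      by simp
    with True show ?thesis
      by (simp only: sg_val_Suc_move_values Max_star_move_values if_True) (simp add: S_def)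
  next
    case False
    with moves have "move_values (star_edges n) (Suc m) p f U
      = {sgn (S + of_bool (even m)), sgn (- S + of_bool (even m)),
         sgn (\<bar>S + 1\<bar> - of_bool (\<not> even m)), sgn (\<bar>S - 1\<bar> - of_bool (\<not> even m))}"
      by simp
    with False show ?thesis
      by (simp only: sg_val_Suc_move_values Min_star_move_values if_False) (simp add: S_def)
  qed
qed

lemma sign_game_outcome_star:
  "sign_game_outcome (star_vertices n) (star_edges n) p = - player_sign p * of_bool (odd n)"
proof -
  have "sign_game_outcome (star_vertices n) (star_edges n) p
          = sg_val (star_edges n) (Suc n) p (\<lambda>_. 0) {0..n}"
    by (simp add: sign_game_outcome_def star_vertices_def)
  also have "\<dots> = player_sign p * sgn (\<bar>\<Sum>i\<in>{1..n}. 0\<bar> - of_bool (odd n))"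
    by (rule sg_val_star_centre_free) auto
  finally show ?thesis by simp
qed

theorem theorem2:
  fixes n :: nat
  assumes "n \<ge> 1"
  shows "(even n \<longrightarrow>
            sign_game_outcome (star_vertices n) (star_edges n) True = 0 \<and>
            sign_game_outcome (star_vertices n) (star_edges n) False = 0)
       \<and> (odd n \<longrightarrow>
            sign_game_outcome (star_vertices n) (star_edges n) True = -1 \<and>
            sign_game_outcome (star_vertices n) (star_edges n) False = 1)"
  by (simp add: sign_game_outcome_star)

end
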